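(* Let $\nu\ge3$ be a square-free integer with $\nu\equiv2$ or $3\pmod 4$. Define $x_0=0$ and $x_{n+1}=\sqrt{\nu+x_n}$. Let $n\ge1$ and let $p$ be a prime divisor of $\nu$. For any maximal ideal $\mathcal{P}\subseteq\mathbb{Z}[x_n]$ with $\mathcal{P}\cap\mathbb{Z}=p\mathbb{Z}$, the localization of $\mathbb{Z}[x_n]$ at $\mathcal{P}$ is a discrete valuation ring.
   Context: Square roots are the positive real ones. *)

theory Defs
  imports "HOL-Computational_Algebra.Computational_Algebra" "HOL-Algebra.Ring_Divisibility"
begin

fun nest :: "int \<Rightarrow> nat \<Rightarrow> real" where
  "nest nu 0 = 0"
| "nest nu (Suc n) = sqrt (of_int nu + nest nu n)"

definition Zadj :: "real \<Rightarrow> real set" where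
  "Zadj a = {poly (map_poly real_of_int q) a | q. True}"

definition ring_of :: "real set \<Rightarrow> real ring" where
  "ring_of S = \<lparr>carrier = S, monoid.mult = (*), one = 1, zero = 0, add = (+)\<rparr>"

text \<open>Localization of a subring S of the reals at a prime ideal P, realised inside the reals
  (which contain the fraction field of S).\<close>
definition localization :: "real set \<Rightarrow> real set \<Rightarrow> real set" where
  "localization S P = {a / b | a b. a \<in> S \<and> b \<in> S - P}"

definition DVR :: "('a, 'b) ring_scheme \<Rightarrow> bool" where
  "DVR R \<longleftrightarrow> principal_domain R \<and>
     (\<exists>!P. primeideal P R \<and> P \<noteq> {\<zero>\<^bsub>R\<^esub>})"

end

theory Submission
  imports Defs
begin

text \<open>
  Put x = x_n and N = 2^n. Every x_k with k \<le> n lies in P, and x_{k+1}^2 = x_k + nu with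
  nu \<in> P shows, by induction, that in the localization nu = x_k^(2^k) times a unit; for k = n
  and since p exactly divides nu, also p = x^N times a unit. Hence a nonzero integer c is x^(N e)
  times a unit, where e is the multiplicity of p in c. Since x is a root of a monic integer
  polynomial of degree N, every element of Z[x] is a sum of terms c_i x^i with i < N, whose
  x-adic valuations N e_i + i are pairwise distinct modulo N; so every nonzero element is
  x^m times a unit. A local domain in which every nonzero element is a power of a fixed
  nonzero non-unit x times a unit is a discrete valuation ring with uniformizer x.
\<close>


lemma ring_of_simps [simp]:
  "carrier (ring_of S) = S" "mult (ring_of S) = (*)" "one (ring_of S) = 1"
  "zero (ring_of S) = 0" "add (ring_of S) = (+)"
  by (simp_all add: ring_of_def)

definition real_subring :: "real set \<Rightarrow> bool" where
  "real_subring S \<longleftrightarrow> range real_of_int \<subseteq> S \<and> (\<forall>a\<in>S. \<forall>b\<in>S. a + b \<in> S \<and> a * b \<in> S)"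

lemma real_subringD:
  assumes "real_subring S"
  shows real_subring_of_int: "of_int c \<in> S"
    and real_subring_add: "a \<in> S \<Longrightarrow> b \<in> S \<Longrightarrow> a + b \<in> S"
    and real_subring_mult: "a \<in> S \<Longrightarrow> b \<in> S \<Longrightarrow> a * b \<in> S"
  using assms by (auto simp: real_subring_def)

lemma real_subring_uminus: "real_subring S \<Longrightarrow> a \<in> S \<Longrightarrow> - a \<in> S"
  using real_subring_mult[of S "of_int (-1)" a] real_subring_of_int[of S "-1"] by simp

lemma real_subring_power: "real_subring S \<Longrightarrow> a \<in> S \<Longrightarrow> a ^ k \<in> S"
  by (induction k) (auto simp: real_subring_mult real_subring_of_int[of S 1, simplified])

lemma domain_ring_of:
  assumes "real_subring S"
  shows "domain (ring_of S)"
proof -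
  note closed = real_subringD[OF assms] real_subring_uminus[OF assms]
  have zero: "0 \<in> S" and one: "1 \<in> S" using closed(1)[of 0] closed(1)[of 1] by simp_all
  have "abelian_group (ring_of S)"
    by (rule abelian_groupI) (auto simp: closed zero intro!: bexI[of _ "- _"])
  moreover have "comm_monoid (ring_of S)"
    by (rule comm_monoidI) (auto simp: closed one)
  ultimately have "cring (ring_of S)"
    by (rule cringI) (simp add: distrib_right)
  then show ?thesis
    by (rule domain.intro) (unfold_locales, auto)
qed

lemma map_poly_of_int_add:
  "map_poly (of_int :: int \<Rightarrow> 'a :: ring_1) (p + q) = map_poly of_int p + map_poly of_int q"
  by (rule poly_eqI) (simp add: coeff_map_poly)

lemma map_poly_of_int_mult:
  "map_poly (of_int :: int \<Rightarrow> 'a :: comm_ring_1) (p * q) = map_poly of_int p * map_poly of_int q"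
  by (rule poly_eqI) (simp add: coeff_map_poly coeff_mult)

lemma real_subring_Zadj: "real_subring (Zadj x)"
proof -
  have "of_int c \<in> Zadj x" for c
    unfolding Zadj_def by (auto intro!: exI[of _ "[:c:]"] simp: map_poly_pCons)
  moreover have "a + b \<in> Zadj x \<and> a * b \<in> Zadj x" if ab: "a \<in> Zadj x" "b \<in> Zadj x" for a b
  proof -
    obtain q r where "a = poly (map_poly real_of_int q) x" "b = poly (map_poly real_of_int r) x"
      using ab unfolding Zadj_def by blast
    then have "a + b = poly (map_poly real_of_int (q + r)) x"
      and "a * b = poly (map_poly real_of_int (q * r)) x"
      by (simp_all add: map_poly_of_int_add map_poly_of_int_mult)
    then show ?thesis unfolding Zadj_def by blast
  qed
  ultimately show ?thesis by (auto simp: real_subring_def)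
qed

lemma Zadj_eq_sum_powers:
  fixes h :: "int poly"
  assumes a: "a \<in> Zadj x" and h: "lead_coeff h = 1" "poly (map_poly of_int h) x = 0"
  shows "\<exists>c :: nat \<Rightarrow> int. a = (\<Sum>i<degree h. of_int (c i) * x ^ i)"
proof -
  obtain q where q: "a = poly (map_poly real_of_int q) x" using a unfolding Zadj_def by blast
  obtain d r where dr: "pseudo_divmod q h = (d, r)" by (metis surj_pair)
  have "h \<noteq> 0" using h by auto
  have "q = h * d + r" using pseudo_divmod(1)[OF \<open>h \<noteq> 0\<close> dr] h by simp
  then have "a = poly (map_poly real_of_int r) x"
    using q h(2) by (simp add: map_poly_of_int_add map_poly_of_int_mult)
  also have "\<dots> = (\<Sum>i<degree h. of_int (Polynomial.coeff r i) * x ^ i)"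
  proof (cases "r = 0")
    case False
    then have "degree r < degree h" using pseudo_divmod(2)[OF \<open>h \<noteq> 0\<close> dr] by simp
    have "poly (map_poly real_of_int r) x = (\<Sum>i\<le>degree r. of_int (Polynomial.coeff r i) * x ^ i)"
      by (simp add: poly_altdef coeff_map_poly degree_map_poly)
    also have "\<dots> = (\<Sum>i<degree h. of_int (Polynomial.coeff r i) * x ^ i)"
      using \<open>degree r < degree h\<close> by (intro sum.mono_neutral_left) (auto simp: coeff_eq_0)
    finally show ?thesis .
  qed simp
  finally show ?thesis by blast
qed

fun nest_poly :: "int \<Rightarrow> nat \<Rightarrow> int poly" where
  "nest_poly nu 0 = [:0, 1:]"
| "nest_poly nu (Suc j) = nest_poly nu j ^ 2 + [:- nu:]"

lemma nest_poly_monic_degree: "lead_coeff (nest_poly nu j) = 1 \<and> degree (nest_poly nu j) = 2 ^ j"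
proof (induction j)
  case (Suc j)
  let ?h = "nest_poly nu j"
  have "?h \<noteq> 0" using Suc by auto
  have square: "lead_coeff (?h ^ 2) = 1" "degree (?h ^ 2) = 2 ^ Suc j"
    using Suc by (metis lead_coeff_power power_one) (simp add: Suc \<open>?h \<noteq> 0\<close> degree_power_eq)
  then have less: "degree [:- nu:] < degree (?h ^ 2)" by simp
  have "lead_coeff (?h ^ 2 + [:- nu:]) = 1"
    using lead_coeff_add_le[OF less] square(1) by (metis add.commute)
  moreover have "degree (?h ^ 2 + [:- nu:]) = 2 ^ Suc j"
    using degree_add_eq_left[OF less] square(2) by simp
  ultimately show ?case by simp
qed simp

lemma poly_nest_poly_Suc:
  fixes y :: "'a :: comm_ring_1"
  shows "poly (map_poly of_int (nest_poly nu (Suc j))) y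
    = poly (map_poly of_int (nest_poly nu j)) y ^ 2 - of_int nu"
  by (simp add: map_poly_of_int_add map_poly_of_int_mult power2_eq_square map_poly_pCons)

lemma nest_nonneg: "0 \<le> nu \<Longrightarrow> 0 \<le> nest nu k"
  by (induction k) auto

lemma nest_pos: "0 < nu \<Longrightarrow> 0 < nest nu (Suc k)"
  using nest_nonneg[of nu k] by simp

lemma nest_Suc_square: "0 \<le> nu \<Longrightarrow> nest nu (Suc k) ^ 2 = of_int nu + nest nu k"
  using nest_nonneg[of nu k] by simp

lemma poly_nest_poly:
  assumes "0 \<le> nu"
  shows "poly (map_poly of_int (nest_poly nu j)) (nest nu (k + j)) = nest nu k"
proof (induction j arbitrary: k)
  case (Suc j)
  have "poly (map_poly of_int (nest_poly nu (Suc j))) (nest nu (k + Suc j))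
      = poly (map_poly of_int (nest_poly nu j)) (nest nu (Suc k + j)) ^ 2 - of_int nu"
    by (simp only: poly_nest_poly_Suc add_Suc add_Suc_right)
  also have "\<dots> = nest nu (Suc k) ^ 2 - of_int nu"
    by (simp only: Suc.IH)
  also have "\<dots> = nest nu k"
    by (simp add: nest_Suc_square[OF assms] del: nest.simps)
  finally show ?case .
qed (simp add: map_poly_pCons)

lemma nest_in_Zadj:
  assumes "0 \<le> nu" "k \<le> n"
  shows "nest nu k \<in> Zadj (nest nu n)"
proof -
  have "nest nu k = poly (map_poly of_int (nest_poly nu (n - k))) (nest nu n)"
    using poly_nest_poly[OF assms(1), of "n - k" k] assms(2) by simp
  then show ?thesis unfolding Zadj_def by blast
qed

declare nest.simps(2) [simp del]

locale prime_localization =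
  fixes S P :: "real set"
  assumes subring: "real_subring S" and prime: "primeideal P (ring_of S)"
begin

interpretation P: primeideal P "ring_of S" by (rule prime)

abbreviation L where "L \<equiv> localization S P"

lemmas of_int_in_S = real_subring_of_int[OF subring]
lemmas add_in_S = real_subring_add[OF subring]
lemmas mult_in_S = real_subring_mult[OF subring]
lemmas power_in_S = real_subring_power[OF subring]

lemma one_in_S: "1 \<in> S"
  using of_int_in_S[of 1] by simp

lemma P_subset: "P \<subseteq> S"
  using P.a_subset by simp

lemma add_in_P: "a \<in> P \<Longrightarrow> b \<in> P \<Longrightarrow> a + b \<in> P"
  using additive_subgroup.a_closed[OF P.is_additive_subgroup] by simp

lemma mult_in_P: "a \<in> P \<Longrightarrow> s \<in> S \<Longrightarrow> s * a \<in> P"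
  using P.I_l_closed by simp

lemma uminus_in_P: "a \<in> P \<Longrightarrow> - a \<in> P"
  using mult_in_P[of a "-1"] of_int_in_S[of "-1"] by simp

lemma zero_in_P: "0 \<in> P"
  using additive_subgroup.zero_closed[OF P.is_additive_subgroup] by simp

lemma one_notin_P: "1 \<notin> P"
  using P.one_imp_carrier P.I_notcarr by auto

lemma prime_in_P: "a \<in> S \<Longrightarrow> b \<in> S \<Longrightarrow> a * b \<in> P \<Longrightarrow> a \<in> P \<or> b \<in> P"
  using P.I_prime by simp

lemma mult_notin_P: "a \<in> S - P \<Longrightarrow> b \<in> S - P \<Longrightarrow> a * b \<in> S - P"
  using prime_in_P mult_in_S by auto

lemma nonzero_if_notin_P: "b \<notin> P \<Longrightarrow> b \<noteq> 0"
  using zero_in_P by auto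

lemma power_in_P_imp: "a \<in> S \<Longrightarrow> a ^ k \<in> P \<Longrightarrow> a \<in> P"
  by (induction k) (use one_notin_P prime_in_P power_in_S in auto)

lemma mem_localization_iff: "w \<in> L \<longleftrightarrow> (\<exists>a b. a \<in> S \<and> b \<in> S - P \<and> w = a / b)"
  by (auto simp: localization_def)

lemma S_subset_localization: "a \<in> S \<Longrightarrow> a \<in> L"
  unfolding mem_localization_iff using one_in_S one_notin_P by (intro exI[of _ a] exI[of _ 1]) auto

lemma real_subring_localization: "real_subring L"
  unfolding real_subring_def
proof safe
  show "of_int c \<in> L" for c
    using S_subset_localization of_int_in_S by blast
  fix w z assume "w \<in> L" "z \<in> L"
  then obtain a b c d where ab: "a \<in> S" "b \<in> S - P" "w = a / b"
    and cd: "c \<in> S" "d \<in> S - P" "z = c / d"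
    unfolding mem_localization_iff by blast
  have "b * d \<in> S - P" using ab cd mult_notin_P by blast
  moreover have "w + z = (a * d + c * b) / (b * d)" "w * z = (a * c) / (b * d)"
    using ab cd nonzero_if_notin_P by (simp_all add: field_simps)
  moreover have "a * d + c * b \<in> S" "a * c \<in> S"
    using ab cd by (simp_all add: add_in_S mult_in_S)
  ultimately show "w + z \<in> L" "w * z \<in> L"
    unfolding mem_localization_iff by blast+
qed

lemmas mult_in_localization = real_subring_mult[OF real_subring_localization]
lemmas power_in_localization = real_subring_power[OF real_subring_localization]

lemma inverse_notin_localization:
  assumes "z \<in> P" "z \<noteq> 0"
  shows "1 / z \<notin> L"
proof
  assume "1 / z \<in> L"
  then obtain a b where ab: "a \<in> S" "b \<in> S - P" "1 / z = a / b"
    unfolding mem_localization_iff by blast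
  then have "b = a * z" using assms nonzero_if_notin_P[of b] by (simp add: field_simps)
  then show False using mult_in_P[OF assms(1) ab(1)] ab(2) by simp
qed

definition loc_unit :: "real \<Rightarrow> bool" where
  "loc_unit u \<longleftrightarrow> (\<exists>s t. s \<in> S - P \<and> t \<in> S - P \<and> u = s / t)"

lemma loc_unitI: "s \<in> S - P \<Longrightarrow> loc_unit s"
  unfolding loc_unit_def using one_in_S one_notin_P by (intro exI[of _ s] exI[of _ 1]) auto

lemma loc_unit_one: "loc_unit 1"
  using loc_unitI one_in_S one_notin_P by blast

lemma loc_unit_in_localization: "loc_unit u \<Longrightarrow> u \<in> L"
  unfolding loc_unit_def mem_localization_iff by blast

lemma loc_unit_nonzero: "loc_unit u \<Longrightarrow> u \<noteq> 0"
  unfolding loc_unit_def using nonzero_if_notin_P by auto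

lemma loc_unit_inverse: "loc_unit u \<Longrightarrow> loc_unit (1 / u)"
  unfolding loc_unit_def by force

lemma loc_unit_mult:
  assumes "loc_unit u" "loc_unit v"
  shows "loc_unit (u * v)"
proof -
  obtain a b c d where "a \<in> S - P" "b \<in> S - P" "u = a / b" "c \<in> S - P" "d \<in> S - P" "v = c / d"
    using assms unfolding loc_unit_def by blast
  then have "a * c \<in> S - P" "b * d \<in> S - P" "u * v = (a * c) / (b * d)"
    using mult_notin_P by simp_all
  then show ?thesis unfolding loc_unit_def by blast
qed

lemma loc_unit_divide: "loc_unit u \<Longrightarrow> loc_unit v \<Longrightarrow> loc_unit (u / v)"
  using loc_unit_mult[OF _ loc_unit_inverse, of u v] by simp

lemma loc_unit_power: "loc_unit u \<Longrightarrow> loc_unit (u ^ k)"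
  by (induction k) (auto simp: loc_unit_one loc_unit_mult)

lemma loc_unit_add:
  assumes "loc_unit u" "y \<in> L" "z \<in> P"
  shows "loc_unit (u + z * y)"
proof -
  obtain s t where st: "s \<in> S - P" "t \<in> S - P" "u = s / t"
    using assms(1) unfolding loc_unit_def by blast
  obtain c d where cd: "c \<in> S" "d \<in> S - P" "y = c / d"
    using assms(2) unfolding mem_localization_iff by blast
  have sd: "s * d \<in> S - P" and td: "t * d \<in> S - P" using st cd mult_notin_P by auto
  have zct: "z * c * t \<in> P"
    using mult_in_P[OF assms(3), of "c * t"] st cd mult_in_S by (simp add: mult_ac)
  have "s * d + z * c * t \<notin> P"
    using add_in_P[OF _ uminus_in_P[OF zct], of "s * d + z * c * t"] sd by auto
  moreover have "s * d + z * c * t \<in> S" using sd zct P_subset add_in_S by auto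
  moreover have "u + z * y = (s * d + z * c * t) / (t * d)"
    using st cd nonzero_if_notin_P by (simp add: field_simps)
  ultimately show ?thesis unfolding loc_unit_def using sd td by blast
qed

end

context prime_localization
begin

definition has_val :: "real \<Rightarrow> real \<Rightarrow> nat \<Rightarrow> bool" where
  "has_val x w m \<longleftrightarrow> (\<exists>u. loc_unit u \<and> w = x ^ m * u)"

lemma has_val_unit: "loc_unit u \<Longrightarrow> has_val x u 0"
  unfolding has_val_def by auto

lemma has_val_mult:
  assumes "has_val x a i" "has_val x b j"
  shows "has_val x (a * b) (i + j)"
proof -
  obtain u v where "loc_unit u" "a = x ^ i * u" "loc_unit v" "b = x ^ j * v"
    using assms unfolding has_val_def by blast
  then show ?thesis
    unfolding has_val_def by (intro exI[of _ "u * v"]) (auto simp: loc_unit_mult power_add mult_ac)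
qed

lemma has_val_power: "has_val x a m \<Longrightarrow> has_val x (a ^ k) (m * k)"
  by (induction k) (auto simp: has_val_unit loc_unit_one dest: has_val_mult)

lemma has_val_add_less:
  assumes "x \<in> P" "has_val x a i" "has_val x b j" "i < j"
  shows "has_val x (a + b) i"
proof -
  obtain u v where uv: "loc_unit u" "a = x ^ i * u" "loc_unit v" "b = x ^ j * v"
    using assms unfolding has_val_def by blast
  obtain d where d: "j = i + Suc d" using assms(4) less_iff_Suc_add by auto
  have "x \<in> L" using assms(1) P_subset S_subset_localization by blast
  then have "loc_unit (u + x * (x ^ d * v))"
    using uv assms(1) by (intro loc_unit_add) (auto intro: mult_in_localization power_in_localization
        loc_unit_in_localization)
  moreover have "a + b = x ^ i * (u + x * (x ^ d * v))"
    using uv d by (simp add: power_add algebra_simps)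
  ultimately show ?thesis unfolding has_val_def by blast
qed

lemma has_val_sum:
  assumes "x \<in> P" "finite I" "I \<noteq> {}" "\<And>i. i \<in> I \<Longrightarrow> has_val x (t i) (k i)" "inj_on k I"
  shows "\<exists>m \<in> k ` I. has_val x (sum t I) m"
  using assms(2-)
proof (induction I rule: finite_ne_induct)
  case (insert a F)
  then obtain m where m: "m \<in> k ` F" "has_val x (sum t F) m" by auto
  have "k a \<noteq> m" using insert.prems(2) insert.hyps m(1) by (auto simp: inj_on_def)
  have ta: "has_val x (t a) (k a)" using insert.prems(1) by simp
  consider "k a < m" | "m < k a" using \<open>k a \<noteq> m\<close> by linarith
  then have "has_val x (t a + sum t F) (min (k a) m)"
  proof cases
    case 1
    then show ?thesis using has_val_add_less[OF assms(1) ta m(2)] by simp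
  next
    case 2
    then show ?thesis using has_val_add_less[OF assms(1) m(2) ta] by (simp add: add.commute)
  qed
  moreover have "min (k a) m \<in> k ` insert a F" using m(1) by (auto simp: min_def)
  ultimately show ?case using insert.hyps by auto
qed auto

end

locale uniformizer = prime_localization +
  fixes x :: real
  assumes x_in_P: "x \<in> P" and x_nonzero: "x \<noteq> 0"
    and has_val_exists: "a \<in> S \<Longrightarrow> a \<noteq> 0 \<Longrightarrow> \<exists>m. has_val x a m"
begin

abbreviation R where "R \<equiv> ring_of L"

interpretation R: domain R
  by (rule domain_ring_of[OF real_subring_localization])

lemma x_in_localization: "x \<in> L"
  using x_in_P P_subset S_subset_localization by blast

lemma localization_has_val:
  assumes "w \<in> L" "w \<noteq> 0"
  shows "\<exists>m. has_val x w m"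
proof -
  obtain a b where ab: "a \<in> S" "b \<in> S - P" "w = a / b"
    using assms(1) unfolding mem_localization_iff by blast
  then obtain m where "has_val x a m" using has_val_exists assms(2) by auto
  moreover have "has_val x (1 / b) 0" using has_val_unit loc_unit_inverse loc_unitI ab(2) by blast
  ultimately have "has_val x (a * (1 / b)) m" using has_val_mult by fastforce
  then show ?thesis using ab by auto
qed

lemma power_in_ideal:
  assumes "ideal I R" "w \<in> I" "has_val x w k"
  shows "x ^ k \<in> I"
proof -
  interpret ideal I R by fact
  obtain u where u: "loc_unit u" "w = x ^ k * u" using assms(3) unfolding has_val_def by blast
  have "1 / u \<in> L" using u(1) loc_unit_inverse loc_unit_in_localization by blast
  then have "(1 / u) * w \<in> I" using I_l_closed[OF assms(2), of "1 / u"] by simp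
  then show ?thesis using u loc_unit_nonzero by simp
qed

lemma cgenideal_eq: "PIdl\<^bsub>R\<^esub> a = {y * a | y. y \<in> L}"
  by (simp add: cgenideal_def)

lemma principal_domain: "principal_domain R"
proof (rule principal_domain.intro[OF R.domain_axioms], unfold_locales)
  fix I assume I: "ideal I R"
  interpret ideal I R by fact
  have "0 \<in> I" using additive_subgroup.zero_closed[OF is_additive_subgroup] by simp
  show "\<exists>a\<in>carrier R. I = PIdl\<^bsub>R\<^esub> a"
  proof (cases "I = {0}")
    case True
    then show ?thesis using R.zero_closed by (intro bexI[of _ 0]) (auto simp: cgenideal_eq)
  next
    case False
    then obtain w where "w \<in> I" "w \<noteq> 0" using \<open>0 \<in> I\<close> by blast
    then have "\<exists>k. x ^ k \<in> I"
      using localization_has_val power_in_ideal[OF I] a_subset by fastforce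
    define k0 where "k0 = (LEAST k. x ^ k \<in> I)"
    have k0: "x ^ k0 \<in> I" unfolding k0_def using \<open>\<exists>k. x ^ k \<in> I\<close> by (rule LeastI_ex)
    have "I \<subseteq> PIdl\<^bsub>R\<^esub> (x ^ k0)"
    proof
      fix z assume z: "z \<in> I"
      show "z \<in> PIdl\<^bsub>R\<^esub> (x ^ k0)"
      proof (cases "z = 0")
        case False
        then obtain k u where ku: "loc_unit u" "z = x ^ k * u"
          using localization_has_val z a_subset unfolding has_val_def by fastforce
        then have "k0 \<le> k"
          unfolding k0_def using power_in_ideal[OF I z] has_val_def by (blast intro: Least_le)
        then have "z = (x ^ (k - k0) * u) * x ^ k0" using ku by (simp add: power_add[symmetric] mult_ac)
        moreover have "x ^ (k - k0) * u \<in> L"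
          using ku x_in_localization by (blast intro: mult_in_localization power_in_localization
              loc_unit_in_localization)
        ultimately show ?thesis unfolding cgenideal_eq by blast
      qed (use R.zero_closed in \<open>auto simp: cgenideal_eq\<close>)
    qed
    moreover have "PIdl\<^bsub>R\<^esub> (x ^ k0) \<subseteq> I" using R.cgenideal_minimal[OF I k0] .
    ultimately show ?thesis using x_in_localization power_in_localization by auto
  qed
qed

lemma mem_cgenideal_x_iff: "w \<in> PIdl\<^bsub>R\<^esub> x \<longleftrightarrow> w \<in> L \<and> \<not> loc_unit w"
proof
  assume "w \<in> PIdl\<^bsub>R\<^esub> x"
  then obtain y where y: "y \<in> L" "w = y * x" unfolding cgenideal_eq by blast
  have "\<not> loc_unit w"
  proof
    assume "loc_unit w"
    then have "y * (1 / w) \<in> L"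
      using y(1) loc_unit_inverse loc_unit_in_localization mult_in_localization by blast
    moreover have "y * (1 / w) = 1 / x"
      using y(2) loc_unit_nonzero[OF \<open>loc_unit w\<close>] by simp
    ultimately show False using inverse_notin_localization x_in_P x_nonzero by simp
  qed
  then show "w \<in> L \<and> \<not> loc_unit w"
    using y x_in_localization mult_in_localization by blast
next
  assume w: "w \<in> L \<and> \<not> loc_unit w"
  show "w \<in> PIdl\<^bsub>R\<^esub> x"
  proof (cases "w = 0")
    case False
    then obtain k u where ku: "loc_unit u" "w = x ^ k * u"
      using localization_has_val w unfolding has_val_def by blast
    then obtain j where "k = Suc j" using w by (cases k) auto
    then have "w = (x ^ j * u) * x" using ku by (simp add: mult_ac)
    moreover have "x ^ j * u \<in> L"
      using ku x_in_localization by (blast intro: mult_in_localization power_in_localization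
          loc_unit_in_localization)
    ultimately show ?thesis unfolding cgenideal_eq by blast
  qed (use R.zero_closed in \<open>auto simp: cgenideal_eq\<close>)
qed

lemma primeideal_cgenideal_x: "primeideal (PIdl\<^bsub>R\<^esub> x) R"
proof (rule primeidealI)
  show "ideal (PIdl\<^bsub>R\<^esub> x) R" using R.cgenideal_ideal x_in_localization by simp
  show "cring R" by (rule R.is_cring)
  show "carrier R \<noteq> PIdl\<^bsub>R\<^esub> x" using mem_cgenideal_x_iff loc_unit_one R.one_closed by auto
next
  fix a b assume "a \<in> carrier R" "b \<in> carrier R" "a \<otimes>\<^bsub>R\<^esub> b \<in> PIdl\<^bsub>R\<^esub> x"
  then show "a \<in> PIdl\<^bsub>R\<^esub> x \<or> b \<in> PIdl\<^bsub>R\<^esub> x"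
    using loc_unit_mult by (auto simp: mem_cgenideal_x_iff)
qed

lemma primeideal_eq_cgenideal_x:
  assumes "primeideal Q R" "Q \<noteq> {0}"
  shows "Q = PIdl\<^bsub>R\<^esub> x"
proof -
  interpret Q: primeideal Q R by fact
  have no_unit: "\<not> loc_unit u" if "u \<in> Q" for u
  proof
    assume "loc_unit u"
    then have "(1 / u) * u \<in> Q"
      using Q.I_l_closed[OF that, of "1 / u"] loc_unit_inverse loc_unit_in_localization by simp
    then show False using \<open>loc_unit u\<close> loc_unit_nonzero Q.one_imp_carrier Q.I_notcarr by simp
  qed
  have "0 \<in> Q" using additive_subgroup.zero_closed[OF Q.is_additive_subgroup] by simp
  then obtain w where "w \<in> Q" "w \<noteq> 0" using assms(2) by blast
  then obtain k where "x ^ k \<in> Q"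
    using localization_has_val power_in_ideal[OF Q.is_ideal] Q.a_subset by fastforce
  have "x ^ j \<in> Q \<Longrightarrow> x \<in> Q" for j
  proof (induction j)
    case 0
    then show ?case using no_unit loc_unit_one by auto
  next
    case (Suc j)
    then show ?case
      using Q.I_prime[of x "x ^ j"] x_in_localization power_in_localization by auto
  qed
  then have "PIdl\<^bsub>R\<^esub> x \<subseteq> Q" using R.cgenideal_minimal[OF Q.is_ideal] \<open>x ^ k \<in> Q\<close> by blast
  moreover have "Q \<subseteq> PIdl\<^bsub>R\<^esub> x" using no_unit Q.a_subset by (auto simp: mem_cgenideal_x_iff)
  ultimately show ?thesis by blast
qed

theorem DVR_localization: "DVR R"
proof -
  have "x \<in> PIdl\<^bsub>R\<^esub> x" using R.cgenideal_self x_in_localization by simp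
  then have "primeideal (PIdl\<^bsub>R\<^esub> x) R \<and> PIdl\<^bsub>R\<^esub> x \<noteq> {\<zero>\<^bsub>R\<^esub>}"
    using primeideal_cgenideal_x x_nonzero by auto
  moreover have "Q = PIdl\<^bsub>R\<^esub> x" if "primeideal Q R \<and> Q \<noteq> {\<zero>\<^bsub>R\<^esub>}" for Q
    using primeideal_eq_cgenideal_x that by simp
  ultimately show ?thesis unfolding DVR_def using principal_domain by blast
qed

end

locale nested_radical_localization = prime_localization +
  fixes nu p :: int and n :: nat
  assumes S_eq: "S = Zadj (nest nu n)" and nu_pos: "0 < nu" and n_pos: "0 < n"
    and p_prime: "Factorial_Ring.prime p" and p_dvd_nu: "p dvd nu" and p_square_not_dvd_nu: "\<not> p ^ 2 dvd nu"
    and of_int_in_P_iff: "of_int c \<in> P \<longleftrightarrow> p dvd c"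
begin

lemma nest_in_S: "k \<le> n \<Longrightarrow> nest nu k \<in> S"
  using nest_in_Zadj nu_pos S_eq by simp

lemma nest_in_P: "k \<le> n \<Longrightarrow> nest nu k \<in> P"
proof (induction k)
  case 0
  then show ?case using zero_in_P by simp
next
  case (Suc k)
  have "of_int nu \<in> P" using of_int_in_P_iff p_dvd_nu by simp
  then have "nest nu (Suc k) ^ 2 \<in> P"
    using add_in_P Suc nest_Suc_square nu_pos by simp
  then show ?case using power_in_P_imp nest_in_S Suc.prems by blast
qed

lemma nu_has_val: "1 \<le> k \<Longrightarrow> k \<le> n \<Longrightarrow> has_val (nest nu k) (of_int nu) (2 ^ k)"
proof (induction k rule: nat_induct_at_least)
  case base
  have "of_int nu = nest nu 1 ^ 2 * 1" using nest_Suc_square[of nu 0] nu_pos by simp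
  then show ?case unfolding has_val_def using loc_unit_one by auto
next
  case (Suc k)
  let ?y = "nest nu k" and ?z = "nest nu (Suc k)"
  obtain U where U: "loc_unit U" "of_int nu = ?y ^ 2 ^ k * U"
    using Suc unfolding has_val_def by auto
  have "has_val ?y ?y 1" unfolding has_val_def using loc_unit_one by auto
  moreover have "has_val ?y (of_int nu) (2 ^ k)" using U unfolding has_val_def by auto
  moreover have "1 < (2 :: nat) ^ k" by (rule one_less_power) (use Suc(1) in auto)
  ultimately have "has_val ?y (?y + of_int nu) 1"
    using has_val_add_less nest_in_P Suc.prems by simp
  then obtain W where W: "loc_unit W" "?z ^ 2 = ?y * W"
    using nest_Suc_square nu_pos unfolding has_val_def by (auto simp: add.commute)
  have "of_int nu = (?z ^ 2 / W) ^ 2 ^ k * U" using U W loc_unit_nonzero by simp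
  also have "\<dots> = ?z ^ 2 ^ Suc k * (U / W ^ 2 ^ k)"
    by (simp add: power_divide power_mult[symmetric] mult.commute)
  finally show ?case unfolding has_val_def using loc_unit_divide loc_unit_power U W by blast
qed

lemma p_has_val: "has_val (nest nu n) (of_int p) (2 ^ n)"
proof -
  obtain m where m: "nu = p * m" using p_dvd_nu by blast
  then have "\<not> p dvd m" using p_square_not_dvd_nu by (auto simp: power2_eq_square)
  then have "loc_unit (1 / of_int m)"
    using of_int_in_P_iff of_int_in_S loc_unitI loc_unit_inverse by blast
  moreover have "has_val (nest nu n) (of_int nu) (2 ^ n)" using nu_has_val n_pos by simp
  ultimately have "has_val (nest nu n) (of_int nu * (1 / of_int m)) (2 ^ n + 0)"
    using has_val_mult has_val_unit by blast
  moreover have "m \<noteq> 0" using m nu_pos by auto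
  ultimately show ?thesis using m by simp
qed

lemma of_int_has_val:
  assumes "c \<noteq> 0"
  shows "\<exists>e. has_val (nest nu n) (of_int c) (2 ^ n * e)"
proof -
  obtain c' where c': "c = p ^ multiplicity p c * c'" "\<not> p dvd c'"
    using multiplicity_decompose'[OF assms] p_prime not_prime_unit by blast
  then have "loc_unit (of_int c')" using of_int_in_P_iff of_int_in_S loc_unitI by blast
  then have "has_val (nest nu n) (of_int p ^ multiplicity p c * of_int c') (2 ^ n * multiplicity p c + 0)"
    using has_val_mult has_val_power[OF p_has_val] has_val_unit by blast
  then show ?thesis using c'(1) by (metis add_0_right of_int_mult of_int_power)
qed

lemma nonzero_has_val:
  assumes "a \<in> S" "a \<noteq> 0"
  shows "\<exists>m. has_val (nest nu n) a m"
proof -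
  let ?x = "nest nu n" and ?N = "2 ^ n :: nat"
  have root: "poly (map_poly of_int (nest_poly nu n)) ?x = 0"
    using poly_nest_poly[of nu n 0] nu_pos by simp
  have monic: "lead_coeff (nest_poly nu n) = 1" and degree: "degree (nest_poly nu n) = ?N"
    using nest_poly_monic_degree[of nu n] by blast+
  obtain c where "a = (\<Sum>i<degree (nest_poly nu n). of_int (c i) * ?x ^ i)"
    using Zadj_eq_sum_powers[OF _ monic root] assms(1) S_eq by auto
  then have c: "a = (\<Sum>i<?N. of_int (c i) * ?x ^ i)" by (simp only: degree)
  define I where "I = {i. i < ?N \<and> c i \<noteq> 0}"
  have a_eq: "a = (\<Sum>i\<in>I. of_int (c i) * ?x ^ i)"
    unfolding c I_def by (rule sum.mono_neutral_right) auto
  then have "I \<noteq> {}" using assms(2) by auto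
  have "\<forall>i\<in>I. \<exists>e. has_val ?x (of_int (c i)) (?N * e)" using of_int_has_val I_def by auto
  then obtain e where e: "\<And>i. i \<in> I \<Longrightarrow> has_val ?x (of_int (c i)) (?N * e i)" by metis
  have term_val: "has_val ?x (of_int (c i) * ?x ^ i) (?N * e i + i)" if "i \<in> I" for i
    using has_val_mult[OF e[OF that], of "?x ^ i" i] loc_unit_one unfolding has_val_def by auto
  have inj: "inj_on (\<lambda>i. ?N * e i + i) I"
  proof (rule inj_onI)
    fix i j assume "i \<in> I" "j \<in> I" "?N * e i + i = ?N * e j + j"
    then have "(?N * e i + i) mod ?N = (?N * e j + j) mod ?N" by simp
    then show "i = j" using \<open>i \<in> I\<close> \<open>j \<in> I\<close> unfolding I_def by simp
  qed
  have "finite I" unfolding I_def by simp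
  then show ?thesis
    using has_val_sum[where t = "\<lambda>i. of_int (c i) * ?x ^ i" and k = "\<lambda>i. ?N * e i + i",
        OF nest_in_P _ \<open>I \<noteq> {}\<close> term_val inj] a_eq by auto
qed

end

sublocale nested_radical_localization \<subseteq> uniformizer S P "nest nu n"
proof unfold_locales
  show "nest nu n \<in> P" using nest_in_P by simp
  show "nest nu n \<noteq> 0" using nest_pos[OF nu_pos, of "n - 1"] n_pos by simp
qed (rule nonzero_has_val)

theorem lemma4p3:
  fixes nu p :: int and n :: nat and P :: "real set"
  assumes "nu \<ge> 3" and "squarefree nu" and "nu mod 4 = 2 \<or> nu mod 4 = 3"
    and "n \<ge> 1" and "Factorial_Ring.prime p" and "p dvd nu"
    and "maximalideal P (ring_of (Zadj (nest nu n)))"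
    and "P \<inter> \<int> = {real_of_int (p * k) | k. True}"
  shows "DVR (ring_of (localization (Zadj (nest nu n)) P))"
proof -
  \<comment> \<open>Maximality of P is only used through primality.\<close>
  have "primeideal P (ring_of (Zadj (nest nu n)))"
    using domain_ring_of[OF real_subring_Zadj] assms(7) by (metis cring.maximalideal_prime domain_def)
  moreover have "of_int c \<in> P \<longleftrightarrow> p dvd c" for c
  proof -
    have "of_int c \<in> P \<longleftrightarrow> (\<exists>k. (of_int c :: real) = of_int (p * k))"
      using assms(8) by (auto simp: Ints_def)
    then show ?thesis by (auto simp: dvd_def simp del: of_int_mult)
  qed
  moreover have "\<not> p ^ 2 dvd nu"
    using squarefreeD[OF assms(2)] assms(5) not_prime_unit by blast
  ultimately interpret nested_radical_localization "Zadj (nest nu n)" P nu p n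
    using assms(1,4-6) real_subring_Zadj
    by (intro nested_radical_localization.intro prime_localization.intro
        nested_radical_localization_axioms.intro) auto
  show ?thesis by (rule DVR_localization)
qed

end
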